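(* Let the loss $f(\cdot,z)$ be convex and $\beta$-smooth for all $z\in\mathcal{Z}$. Consider full-batch GD with $T$ iterations and learning rates $\eta_t\le1/(2\beta)$ for all $t\le T+1$. Then $$|\epsilon_{\mathrm{gen}}|\le\frac{4\sqrt{2\beta(\epsilon_{\mathrm{opt}}+\epsilon_{\mathbf{c}})\,\epsilon_{\mathrm{path}}}}{n}\sqrt{\sum_{t=1}^T\eta_t}+8\beta\frac{\epsilon_{\mathrm{path}}}{n^2}\sum_{t=1}^T\eta_t .$$
   Context: Let $\mathcal{D}$ be a distribution on $\mathcal{Z}$ and $z_1,\dots,z_n$ i.i.d. from $\mathcal{D}$; $S=(z_1,\dots,z_n)$. The loss $f:\mathbb{R}^d\times\mathcal{Z}\to[0,\infty)$ is non-negative; $\beta$-smooth means $\|\nabla f(w,z)-\nabla f(u,z)\|_2\le\beta\|w-u\|_2$. $R(w)=\mathbb{E}_{Z\sim\mathcal{D}}[f(w,Z)]$, $R_S(w)=\frac1n\sum_j f(w,z_j)$, $W^*_S$ a minimizer of $R_S$ (assumed to exist). Full-batch GD: from a fixed $W_1$, $W_{t+1}=W_t-\frac{\eta_t}{n}\sum_{j=1}^n\nabla f(W_t,z_j)$, $t=1,\dots,T$, output $A(S)=W_{T+1}$. Definitions: $\epsilon_{\mathrm{gen}}=\mathbb{E}[R(A(S))-R_S(A(S))]$; $\epsilon_{\mathrm{opt}}=\mathbb{E}[R_S(A(S))-R_S(W^*_S)]$; $\epsilon_{\mathbf{c}}=\mathbb{E}[R_S(W^*_S)]$; $\epsilon_{\mathrm{path}}=\sum_{t=1}^T\eta_t\mathbb{E}[\|\nabla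 f(W_t,z_i)\|_2^2]$ for a fixed index $i$. *)

theory Defs
  imports "HOL-Probability.Probability"
begin

definition pop_risk :: "'z measure \<Rightarrow> ('w \<Rightarrow> 'z \<Rightarrow> real) \<Rightarrow> 'w \<Rightarrow> real" where
  "pop_risk D f w = (\<integral>z. f w z \<partial>D)"

definition emp_risk :: "nat \<Rightarrow> ('w \<Rightarrow> 'z \<Rightarrow> real) \<Rightarrow> (nat \<Rightarrow> 'z) \<Rightarrow> 'w \<Rightarrow> real" where
  "emp_risk n f S w = (\<Sum>j<n. f w (S j)) / real n"

text \<open>A minimizer W*_S of R_S (chosen by Hilbert choice; existence is assumed in the theorem).\<close>
definition emp_minimizer :: "nat \<Rightarrow> ('w \<Rightarrow> 'z \<Rightarrow> real) \<Rightarrow> (nat \<Rightarrow> 'z) \<Rightarrow> 'w" where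
  "emp_minimizer n f S = (SOME w. \<forall>u. emp_risk n f S w \<le> emp_risk n f S u)"

text \<open>Full-batch GD, 0-based auxiliary iteration: gd_aux .. k = W_{k+1}.
  g w z is the gradient of f(.,z) at w; eta is indexed from 1.\<close>
primrec gd_aux :: "nat \<Rightarrow> ('w::real_vector \<Rightarrow> 'z \<Rightarrow> 'w) \<Rightarrow> (nat \<Rightarrow> real) \<Rightarrow> 'w \<Rightarrow> (nat \<Rightarrow> 'z) \<Rightarrow> nat \<Rightarrow> 'w" where
  "gd_aux n g eta W1 S 0 = W1"
| "gd_aux n g eta W1 S (Suc k) =
     gd_aux n g eta W1 S k - (eta (Suc k) / real n) *\<^sub>R (\<Sum>j<n. g (gd_aux n g eta W1 S k) (S j))"

definition gd_iter :: "nat \<Rightarrow> ('w::real_vector \<Rightarrow> 'z \<Rightarrow> 'w) \<Rightarrow> (nat \<Rightarrow> real) \<Rightarrow> 'w \<Rightarrow> (nat \<Rightarrow> 'z) \<Rightarrow> nat \<Rightarrow> 'w" where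
  "gd_iter n g eta W1 S t = gd_aux n g eta W1 S (t - 1)"

definition gd_out :: "nat \<Rightarrow> ('w::real_vector \<Rightarrow> 'z \<Rightarrow> 'w) \<Rightarrow> (nat \<Rightarrow> real) \<Rightarrow> 'w \<Rightarrow> nat \<Rightarrow> (nat \<Rightarrow> 'z) \<Rightarrow> 'w" where
  "gd_out n g eta W1 T S = gd_iter n g eta W1 S (T + 1)"

definition sample_measure :: "nat \<Rightarrow> 'z measure \<Rightarrow> (nat \<Rightarrow> 'z) measure" where
  "sample_measure n D = PiM {..<n} (\<lambda>_. D)"

definition eps_gen where
  "eps_gen n D f g eta W1 T =
     (\<integral>S. pop_risk D f (gd_out n g eta W1 T S) - emp_risk n f S (gd_out n g eta W1 T S) \<partial>sample_measure n D)"

definition eps_opt where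
  "eps_opt n D f g eta W1 T =
     (\<integral>S. emp_risk n f S (gd_out n g eta W1 T S) - emp_risk n f S (emp_minimizer n f S) \<partial>sample_measure n D)"

definition eps_c where
  "eps_c n D f = (\<integral>S. emp_risk n f S (emp_minimizer n f S) \<partial>sample_measure n D)"

definition eps_path where
  "eps_path n D g eta W1 T i =
     (\<Sum>t=1..T. eta t * (\<integral>S. (norm (g (gd_iter n g eta W1 S t) (S i)))\<^sup>2 \<partial>sample_measure n D))"

end

theory Submission
  imports Defs
begin

text \<open>The proof is a stability argument with a ghost sample. Replacing \<open>z\<^sub>i\<close> by an independent
  copy \<open>z'\<^sub>i\<close> gives a sample \<open>S\<^sup>(\<^sup>i\<^sup>)\<close>; by exchangeability,
  \<open>\<epsilon>\<^sub>g\<^sub>e\<^sub>n = E[f(A(S\<^sup>(\<^sup>i\<^sup>)), z\<^sub>i) - f(A(S), z\<^sub>i)]\<close> and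
  \<open>\<epsilon>\<^sub>o\<^sub>p\<^sub>t + \<epsilon>\<^sub>c = E[f(A(S), z\<^sub>i)]\<close>.
  For a convex \<open>\<beta>\<close>-smooth loss,
  \<open>|f(u) - f(w)| \<le> \<parallel>\<nabla>f(w)\<parallel> \<parallel>u - w\<parallel> + \<beta> \<parallel>u - w\<parallel>\<^sup>2\<close>, and \<open>\<parallel>\<nabla>f(w)\<parallel>\<^sup>2 \<le> 4 \<beta> f(w)\<close> because \<open>f \<ge> 0\<close>.
  As \<open>\<eta>\<^sub>t \<le> 1/\<beta>\<close>, gradient steps on the part of the empirical risk shared by \<open>S\<close> and
  \<open>S\<^sup>(\<^sup>i\<^sup>)\<close> are nonexpansive, so \<open>\<parallel>A(S\<^sup>(\<^sup>i\<^sup>)) - A(S)\<parallel>\<close> is at most \<open>1/n\<close> times the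
  \<open>\<eta>\<close>-weighted sum of the gradient norms at the replaced points along both trajectories.
  Cauchy-Schwarz over \<open>t\<close> and over the sample finishes the proof, with constants
  \<open>\<surd>\<beta>\<close> and \<open>4\<beta>\<close> in place of \<open>\<surd>(2\<beta>)\<close> and \<open>8\<beta>\<close>.\<close>

section \<open>Convex smooth functions\<close>

lemma convex_on_gderiv_above_tangent:
  fixes h :: "'a::real_inner \<Rightarrow> real"
  assumes deriv: "GDERIV h w :> G" and convex: "convex_on UNIV h"
  shows "h w + inner G (u - w) \<le> h u"
proof -
  define \<phi> where "\<phi> s = h (w + s *\<^sub>R (u - w))" for s :: real
  have "convex_on UNIV \<phi>"
  proof (rule convex_onI)
    fix t x y :: real assume "0 < t" "t < 1"
    have "w + ((1 - t) * x + t * y) *\<^sub>R (u - w)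
        = (1 - t) *\<^sub>R (w + x *\<^sub>R (u - w)) + t *\<^sub>R (w + y *\<^sub>R (u - w))"
      by (simp add: algebra_simps)
    with \<open>0 < t\<close> \<open>t < 1\<close> show "\<phi> ((1 - t) *\<^sub>R x + t *\<^sub>R y) \<le> (1 - t) * \<phi> x + t * \<phi> y"
      unfolding \<phi>_def using convex_onD[OF convex] by simp
  qed simp
  moreover have "(\<phi> has_field_derivative inner (u - w) G) (at 0)"
  proof -
    have line: "((\<lambda>s. w + s *\<^sub>R (u - w)) has_derivative (\<lambda>s. s *\<^sub>R (u - w))) (at 0)"
      by (auto intro!: derivative_eq_intros)
    have "(h has_derivative (\<lambda>v. inner v G)) (at (w + 0 *\<^sub>R (u - w)))"
      using deriv by (simp add: gderiv_def)
    from has_derivative_compose[OF line this] show ?thesis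
      unfolding \<phi>_def has_field_derivative_def by (simp add: mult.commute[of _ "inner (u - w) G"])
  qed
  ultimately have "\<phi> 1 - \<phi> 0 \<ge> inner (u - w) G * (1 - 0)"
    by (intro convex_on_imp_above_tangent) auto
  then show ?thesis
    unfolding \<phi>_def by (simp add: inner_commute)
qed

locale convex_smooth =
  fixes h :: "'a::real_inner \<Rightarrow> real" and G :: "'a \<Rightarrow> 'a" and L :: real
  assumes gderiv: "GDERIV h w :> G w"
    and convex: "convex_on UNIV h"
    and lipschitz: "norm (G w - G u) \<le> L * norm (w - u)"
    and L_pos: "L > 0"
begin

lemma above_tangent: "h w + inner (G w) (u - w) \<le> h u"
  by (rule convex_on_gderiv_above_tangent[OF gderiv convex])

lemma below_quadratic: "h u \<le> h w + inner (G w) (u - w) + L * (norm (u - w))\<^sup>2"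
proof -
  have "inner (G u - G w) (u - w) \<le> norm (G u - G w) * norm (u - w)"
    by (rule norm_cauchy_schwarz)
  also have "\<dots> \<le> L * norm (u - w) * norm (u - w)"
    by (intro mult_right_mono lipschitz) simp
  finally have "inner (G u - G w) (u - w) \<le> L * (norm (u - w))\<^sup>2"
    by (simp add: power2_eq_square)
  moreover have "h u + inner (G u) (w - u) \<le> h w"
    by (rule above_tangent)
  moreover have "inner (G u) (w - u) = - inner (G w) (u - w) - inner (G u - G w) (u - w)"
    by (simp add: inner_diff_left inner_diff_right)
  ultimately show ?thesis by linarith
qed

lemma norm_gradient_diff_le_Bregman:
  "(norm (G u - G w))\<^sup>2 / (4 * L) \<le> h u - h w - inner (G w) (u - w)"
proof -
  define \<Delta> where "\<Delta> = G u - G w"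
  define c where "c = 1 / (2 * L)"
  define v where "v = u - c *\<^sub>R \<Delta>"
  have "h v \<le> h u + inner (G u) (v - u) + L * (norm (v - u))\<^sup>2"
    by (rule below_quadratic)
  moreover have "h w + inner (G w) (v - w) \<le> h v"
    by (rule above_tangent)
  moreover have "inner (G w) (v - w) = inner (G w) (u - w) - c * inner (G w) \<Delta>"
    by (simp add: v_def inner_diff_right algebra_simps)
  moreover have "inner (G u) (v - u) = - c * inner (G u) \<Delta>"
    by (simp add: v_def)
  moreover have "(norm (v - u))\<^sup>2 = c\<^sup>2 * (norm \<Delta>)\<^sup>2"
    by (simp add: v_def power_mult_distrib)
  moreover have "inner (G u) \<Delta> - inner (G w) \<Delta> = (norm \<Delta>)\<^sup>2"
    by (simp add: \<Delta>_def power2_norm_eq_inner inner_diff_left)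
  ultimately have "h w + inner (G w) (u - w) + (c - L * c\<^sup>2) * (norm \<Delta>)\<^sup>2 \<le> h u"
    by (simp add: algebra_simps)
  moreover have "c - L * c\<^sup>2 = 1 / (4 * L)"
    using L_pos by (simp add: c_def power2_eq_square field_simps)
  ultimately show ?thesis by (simp add: \<Delta>_def)
qed

lemma gradient_cocoercive: "(norm (G w - G u))\<^sup>2 / (2 * L) \<le> inner (G w - G u) (w - u)"
proof -
  have "(norm (G w - G u))\<^sup>2 / (4 * L) \<le> h u - h w - inner (G w) (u - w)"
    using norm_gradient_diff_le_Bregman[of u w] by (simp add: norm_minus_commute)
  moreover have "(norm (G w - G u))\<^sup>2 / (4 * L) \<le> h w - h u - inner (G u) (w - u)"
    by (rule norm_gradient_diff_le_Bregman)
  moreover have "inner (G w - G u) (w - u) = - inner (G w) (u - w) - inner (G u) (w - u)"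
    by (simp add: inner_diff_left inner_diff_right algebra_simps)
  ultimately show ?thesis by (simp add: field_simps)
qed

lemma gradient_step_nonexpansive:
  assumes "0 \<le> s" "s \<le> 1 / L"
  shows "norm ((w - s *\<^sub>R G w) - (u - s *\<^sub>R G u)) \<le> norm (w - u)"
proof -
  define \<Delta> where "\<Delta> = G w - G u"
  define d where "d = w - u"
  have "(norm (d - s *\<^sub>R \<Delta>))\<^sup>2 = inner (d - s *\<^sub>R \<Delta>) (d - s *\<^sub>R \<Delta>)"
    by (simp add: power2_norm_eq_inner)
  also have "\<dots> = inner d d - 2 * s * inner \<Delta> d + s\<^sup>2 * inner \<Delta> \<Delta>"
    by (simp add: inner_diff_left inner_diff_right inner_commute algebra_simps power2_eq_square)
  also have "\<dots> = (norm d)\<^sup>2 - 2 * s * inner \<Delta> d + s\<^sup>2 * (norm \<Delta>)\<^sup>2"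
    by (simp add: power2_norm_eq_inner)
  also have "\<dots> \<le> (norm d)\<^sup>2 - 2 * s * ((norm \<Delta>)\<^sup>2 / (2 * L)) + s\<^sup>2 * (norm \<Delta>)\<^sup>2"
    using mult_left_mono[OF gradient_cocoercive[of w u], of "2 * s"] assms
    by (simp add: \<Delta>_def d_def)
  also have "\<dots> = (norm d)\<^sup>2 - s * (1 / L - s) * (norm \<Delta>)\<^sup>2"
    using L_pos by (simp add: field_simps power2_eq_square)
  also have "\<dots> \<le> (norm d)\<^sup>2"
    using assms by simp
  finally have "norm (d - s *\<^sub>R \<Delta>) \<le> norm d"
    by (simp add: power_mono_iff)
  also have "d - s *\<^sub>R \<Delta> = (w - s *\<^sub>R G w) - (u - s *\<^sub>R G u)"
    by (simp add: d_def \<Delta>_def algebra_simps)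
  finally show ?thesis by (simp add: d_def)
qed

lemma norm_gradient_sq_le:
  assumes nonneg: "\<And>v. 0 \<le> h v"
  shows "(norm (G w))\<^sup>2 \<le> 4 * L * h w"
proof -
  define c where "c = 1 / (2 * L)"
  define u where "u = w - c *\<^sub>R G w"
  have "h u \<le> h w + inner (G w) (u - w) + L * (norm (u - w))\<^sup>2"
    by (rule below_quadratic)
  also have "\<dots> = h w - (c - L * c\<^sup>2) * (norm (G w))\<^sup>2"
    by (simp add: u_def power2_norm_eq_inner algebra_simps)
  also have "c - L * c\<^sup>2 = 1 / (4 * L)"
    using L_pos by (simp add: c_def power2_eq_square field_simps)
  finally have "(norm (G w))\<^sup>2 / (4 * L) \<le> h w"
    using nonneg[of u] by simp
  then show ?thesis
    using L_pos by (simp add: field_simps)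
qed

lemma abs_diff_le:
  "\<bar>h u - h w\<bar> \<le> norm (G w) * norm (u - w) + L * (norm (u - w))\<^sup>2"
proof -
  have "\<bar>inner (G w) (u - w)\<bar> \<le> norm (G w) * norm (u - w)"
    by (rule Cauchy_Schwarz_ineq2)
  moreover have "0 \<le> L * (norm (u - w))\<^sup>2"
    using L_pos by simp
  ultimately show ?thesis
    using above_tangent[of w u] below_quadratic[of u w] by linarith
qed

end

lemma convex_on_sum_functions:
  fixes h :: "'j \<Rightarrow> 'a::real_vector \<Rightarrow> real"
  assumes "finite J" "\<And>j. j \<in> J \<Longrightarrow> convex_on UNIV (h j)"
  shows "convex_on UNIV (\<lambda>v. \<Sum>j\<in>J. h j v)"
  using assms by (induction J rule: finite_induct) (auto simp: convex_on_const)

lemma convex_smooth_average: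
  fixes h :: "'j \<Rightarrow> 'a::real_inner \<Rightarrow> real"
  assumes J: "finite J" "card J \<le> n" and n: "n > 0" and L: "L > 0"
    and smooth: "\<And>j. j \<in> J \<Longrightarrow> convex_smooth (h j) (G j) L"
  shows "convex_smooth (\<lambda>v. (\<Sum>j\<in>J. h j v) / real n) (\<lambda>v. (1 / real n) *\<^sub>R (\<Sum>j\<in>J. G j v)) L"
proof
  fix w u
  have "((\<lambda>v. (\<Sum>j\<in>J. h j v) / real n) has_derivative (\<lambda>v. (\<Sum>j\<in>J. inner v (G j w)) / real n)) (at w)"
    using convex_smooth.gderiv[OF smooth] n unfolding gderiv_def
    by (auto intro!: derivative_eq_intros)
  then show "GDERIV (\<lambda>v. (\<Sum>j\<in>J. h j v) / real n) w :> (1 / real n) *\<^sub>R (\<Sum>j\<in>J. G j w)"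
    by (simp add: gderiv_def inner_sum_right)
  have "norm ((1 / real n) *\<^sub>R (\<Sum>j\<in>J. G j w) - (1 / real n) *\<^sub>R (\<Sum>j\<in>J. G j u))
      = norm (\<Sum>j\<in>J. G j w - G j u) / real n"
    by (simp add: sum_subtractf flip: scaleR_diff_right)
  also have "\<dots> \<le> (\<Sum>j\<in>J. L * norm (w - u)) / real n"
    using convex_smooth.lipschitz[OF smooth]
    by (intro divide_right_mono order_trans[OF norm_sum] sum_mono) auto
  also have "\<dots> = (real (card J) / real n) * (L * norm (w - u))"
    by simp
  also have "\<dots> \<le> L * norm (w - u)"
    using J L by (intro mult_left_le_one_le) (auto simp: divide_le_eq_1)
  finally show "norm ((1 / real n) *\<^sub>R (\<Sum>j\<in>J. G j w) - (1 / real n) *\<^sub>R (\<Sum>j\<in>J. G j u))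
      \<le> L * norm (w - u)" .
qed (use J L convex_smooth.convex[OF smooth] in \<open>auto intro!: convex_on_sum_functions\<close>)

section \<open>Gradient descent on samples differing in one point\<close>

lemma gd_out_eq_gd_aux: "gd_out n g eta W1 T S = gd_aux n g eta W1 S T"
  by (simp add: gd_out_def gd_iter_def)

lemma gd_aux_cong:
  assumes "\<And>j. j < n \<Longrightarrow> S j = S' j"
  shows "gd_aux n g eta W1 S k = gd_aux n g eta W1 S' k"
  by (induction k) (simp_all add: assms)

lemma gd_aux_restrict: "gd_aux n g eta W1 (restrict S {..<n}) k = gd_aux n g eta W1 S k"
  by (rule gd_aux_cong) simp

lemma gd_aux_permute_sample:
  assumes "bij_betw \<pi> {..<n} {..<n}"
  shows "gd_aux n g eta W1 (S \<circ> \<pi>) k = gd_aux n g eta W1 S k"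
proof (induction k)
  case (Suc k)
  then show ?case
    using sum.reindex_bij_betw[OF assms, of "\<lambda>j. g (gd_aux n g eta W1 S k) (S j)"] by simp
qed simp

lemma borel_measurable_compose_uncurry:
  assumes "(\<lambda>(w, z). g w z) \<in> borel_measurable (borel \<Otimes>\<^sub>M D)"
    and "X \<in> borel_measurable M" and "Z \<in> measurable M D"
  shows "(\<lambda>x. g (X x) (Z x)) \<in> borel_measurable M"
  using measurable_compose[OF measurable_Pair[OF assms(2,3)] assms(1)] by simp

lemma borel_measurable_gd_aux:
  fixes g :: "'w::euclidean_space \<Rightarrow> 'z \<Rightarrow> 'w"
  assumes g: "(\<lambda>(w, z). g w z) \<in> borel_measurable (borel \<Otimes>\<^sub>M D)" and I: "{..<n} \<subseteq> I"
  shows "(\<lambda>S. gd_aux n g eta W1 S k) \<in> borel_measurable (PiM I (\<lambda>_. D))"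
proof (induction k)
  case (Suc k)
  have "(\<lambda>S. g (gd_aux n g eta W1 S k) (S j)) \<in> borel_measurable (PiM I (\<lambda>_. D))" if "j < n" for j
    using that I by (intro borel_measurable_compose_uncurry[OF g Suc.IH] measurable_component_singleton) auto
  with Suc.IH show ?case by simp
qed simp

text \<open>The summands \<open>j \<noteq> i\<close> shared by both samples form one gradient step on their average,
  which is nonexpansive; only the \<open>i\<close>-th summands can move the iterates apart.\<close>
lemma gd_aux_Suc_replace_one:
  fixes g :: "'w::real_inner \<Rightarrow> 'z \<Rightarrow> 'w" and eta :: "nat \<Rightarrow> real" and W1 :: 'w
    and S S' :: "nat \<Rightarrow> 'z" and n k :: nat
  assumes i: "i < n"
    and smooth: "\<And>z. convex_smooth (\<lambda>w. f w z) (\<lambda>w. g w z) beta"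
    and eta: "0 \<le> eta (Suc k)" "eta (Suc k) \<le> 1 / beta"
    and S': "\<And>j. j < n \<Longrightarrow> j \<noteq> i \<Longrightarrow> S' j = S j"
  defines "a \<equiv> gd_aux n g eta W1 S k" and "b \<equiv> gd_aux n g eta W1 S' k"
  shows "norm (gd_aux n g eta W1 S (Suc k) - gd_aux n g eta W1 S' (Suc k))
    \<le> norm (a - b) + eta (Suc k) / real n * (norm (g a (S i)) + norm (g b (S' i)))"
proof -
  define J where "J = {..<n} - {i}"
  define s where "s = eta (Suc k)"
  define GJ where "GJ v = (1 / real n) *\<^sub>R (\<Sum>j\<in>J. g v (S j))" for v
  have "convex_smooth (\<lambda>v. (\<Sum>j\<in>J. f v (S j)) / real n) GJ beta"
    unfolding GJ_def J_def using i convex_smooth.L_pos[OF smooth]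
    by (intro convex_smooth_average smooth) (auto simp: card_Diff_singleton)
  then have step: "norm ((a - s *\<^sub>R GJ a) - (b - s *\<^sub>R GJ b)) \<le> norm (a - b)"
    by (rule convex_smooth.gradient_step_nonexpansive) (use eta in \<open>simp_all add: s_def\<close>)
  have split: "(\<Sum>j<n. g v (T j)) = g v (T i) + (\<Sum>j\<in>J. g v (T j))" for v and T :: "nat \<Rightarrow> 'z"
    using i by (simp add: J_def sum.remove)
  have "(\<Sum>j\<in>J. g b (S' j)) = (\<Sum>j\<in>J. g b (S j))"
    by (intro sum.cong) (auto simp: J_def S')
  then have "gd_aux n g eta W1 S (Suc k) - gd_aux n g eta W1 S' (Suc k)
      = ((a - s *\<^sub>R GJ a) - (b - s *\<^sub>R GJ b)) - (s / real n) *\<^sub>R (g a (S i) - g b (S' i))"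
    by (simp add: a_def b_def s_def GJ_def split[of _ S] split[of _ S'] scaleR_add_right algebra_simps)
  also have "norm \<dots> \<le> norm (a - b) + s / real n * norm (g a (S i) - g b (S' i))"
    using step eta by (intro order_trans[OF norm_triangle_ineq4]) (simp add: s_def)
  also have "\<dots> \<le> norm (a - b) + s / real n * (norm (g a (S i)) + norm (g b (S' i)))"
    using eta by (intro add_left_mono mult_left_mono norm_triangle_ineq4) (simp_all add: s_def)
  finally show ?thesis by (simp add: s_def)
qed

lemma gd_aux_replace_one_dist:
  fixes g :: "'w::real_inner \<Rightarrow> 'z \<Rightarrow> 'w"
  assumes i: "i < n"
    and smooth: "\<And>z. convex_smooth (\<lambda>w. f w z) (\<lambda>w. g w z) beta"
    and eta: "\<And>t. 1 \<le> t \<Longrightarrow> t \<le> k \<Longrightarrow> 0 \<le> eta t \<and> eta t \<le> 1 / beta"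
    and S': "\<And>j. j < n \<Longrightarrow> j \<noteq> i \<Longrightarrow> S' j = S j"
  shows "norm (gd_aux n g eta W1 S k - gd_aux n g eta W1 S' k)
    \<le> (\<Sum>t=1..k. eta t / real n * (norm (g (gd_aux n g eta W1 S (t - 1)) (S i))
                 + norm (g (gd_aux n g eta W1 S' (t - 1)) (S' i))))"
  using eta
proof (induction k)
  case (Suc k)
  have "norm (gd_aux n g eta W1 S (Suc k) - gd_aux n g eta W1 S' (Suc k))
    \<le> norm (gd_aux n g eta W1 S k - gd_aux n g eta W1 S' k)
      + eta (Suc k) / real n * (norm (g (gd_aux n g eta W1 S k) (S i))
                                + norm (g (gd_aux n g eta W1 S' k) (S' i)))"
    by (rule gd_aux_Suc_replace_one[OF i smooth _ _ S']) (use Suc.prems in auto)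
  with Suc show ?case by simp
qed simp

section \<open>Product measures and Cauchy-Schwarz\<close>

lemma product_prob_space_const: "prob_space D \<Longrightarrow> product_prob_space (\<lambda>_. D)"
  unfolding product_prob_space_def product_prob_space_axioms_def product_sigma_finite_def
  by (auto simp: prob_space_imp_sigma_finite)

lemma
  fixes F :: "_ \<Rightarrow> real"
  assumes D: "prob_space D" and JK: "J \<subseteq> K" "finite K"
    and F: "F \<in> borel_measurable (PiM J (\<lambda>_. D))"
  shows integral_PiM_restrict:
      "(\<integral>x. F (restrict x J) \<partial>PiM K (\<lambda>_. D)) = integral\<^sup>L (PiM J (\<lambda>_. D)) F"
    and integrable_PiM_restrict_iff:
      "integrable (PiM K (\<lambda>_. D)) (\<lambda>x. F (restrict x J)) \<longleftrightarrow> integrable (PiM J (\<lambda>_. D)) F"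
proof -
  interpret product_prob_space "\<lambda>_. D"
    by (rule product_prob_space_const[OF D])
  have distr: "PiM J (\<lambda>_. D) = distr (PiM K (\<lambda>_. D)) (PiM J (\<lambda>_. D)) (\<lambda>x. restrict x J)"
    by (rule distr_restrict[OF JK])
  have meas: "(\<lambda>x. restrict x J) \<in> measurable (PiM K (\<lambda>_. D)) (PiM J (\<lambda>_. D))"
    using JK(1) by (rule measurable_restrict_subset)
  show "(\<integral>x. F (restrict x J) \<partial>PiM K (\<lambda>_. D)) = integral\<^sup>L (PiM J (\<lambda>_. D)) F"
    using integral_distr[OF meas F] by (simp flip: distr)
  show "integrable (PiM K (\<lambda>_. D)) (\<lambda>x. F (restrict x J)) \<longleftrightarrow> integrable (PiM J (\<lambda>_. D)) F"
    using integrable_distr_eq[OF meas F] by (simp flip: distr)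
qed

lemma
  fixes F :: "_ \<Rightarrow> real"
  assumes D: "prob_space D" and ab: "a \<in> I" "b \<in> I"
    and F: "F \<in> borel_measurable (PiM I (\<lambda>_. D))"
  shows integral_PiM_transpose:
      "(\<integral>x. F (\<lambda>j\<in>I. x (Transposition.transpose a b j)) \<partial>PiM I (\<lambda>_. D)) = integral\<^sup>L (PiM I (\<lambda>_. D)) F"
    and integrable_PiM_transpose_iff:
      "integrable (PiM I (\<lambda>_. D)) (\<lambda>x. F (\<lambda>j\<in>I. x (Transposition.transpose a b j)))
        \<longleftrightarrow> integrable (PiM I (\<lambda>_. D)) F"
proof -
  have distr: "distr (PiM I (\<lambda>_. D)) (PiM I (\<lambda>_. D)) (\<lambda>x. \<lambda>j\<in>I. x (Transposition.transpose a b j))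
      = PiM I (\<lambda>_. D)"
    using distr_PiM_reindex[of I "\<lambda>_. D" "Transposition.transpose a b" I] D ab
    by (auto simp: Transposition.transpose_def)
  have meas: "(\<lambda>x. \<lambda>j\<in>I. x (Transposition.transpose a b j)) \<in> measurable (PiM I (\<lambda>_. D)) (PiM I (\<lambda>_. D))"
    using ab by (intro measurable_restrict measurable_component_singleton)
      (auto simp: Transposition.transpose_def)
  show "(\<integral>x. F (\<lambda>j\<in>I. x (Transposition.transpose a b j)) \<partial>PiM I (\<lambda>_. D)) = integral\<^sup>L (PiM I (\<lambda>_. D)) F"
    using integral_distr[OF meas F] distr by simp
  show "integrable (PiM I (\<lambda>_. D)) (\<lambda>x. F (\<lambda>j\<in>I. x (Transposition.transpose a b j)))
      \<longleftrightarrow> integrable (PiM I (\<lambda>_. D)) F"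
    using integrable_distr_eq[OF meas F] distr by simp
qed

lemma le_sqrt_mult_sqrt_if_AM_GM:
  fixes x A B :: real
  assumes A: "0 \<le> A" and B: "0 \<le> B" and AM_GM: "\<And>c. c > 0 \<Longrightarrow> 2 * x \<le> c * A + B / c"
  shows "x \<le> sqrt A * sqrt B"
proof (cases "A > 0 \<and> B > 0")
  case True
  then have "sqrt B / sqrt A * A = sqrt A * sqrt B" "B / (sqrt B / sqrt A) = sqrt A * sqrt B"
    by (simp_all add: divide_eq_eq field_simps)
  with AM_GM[of "sqrt B / sqrt A"] True show ?thesis by simp
next
  case False
  have "x \<le> 0"
  proof (rule ccontr)
    assume "\<not> x \<le> 0"
    then have x: "x > 0" by simp
    from False A B consider "A = 0" | "B = 0" by linarith
    then show False
    proof cases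
      case 1
      have "B / ((B + 1) / x) < x"
        using x B by (simp add: field_simps)
      with AM_GM[of "(B + 1) / x"] x B 1 show False by simp
    next
      case 2
      have "x / (A + 1) * A < x"
        using x A by (simp add: field_simps)
      with AM_GM[of "x / (A + 1)"] x A 2 show False by simp
    qed
  qed
  with A B show ?thesis
    by (meson order_trans mult_nonneg_nonneg real_sqrt_ge_zero)
qed

lemma integral_mult_le_sqrt_integral_sq:
  fixes a d :: "_ \<Rightarrow> real"
  assumes "integrable M (\<lambda>x. (a x)\<^sup>2)" "integrable M (\<lambda>x. (d x)\<^sup>2)" "integrable M (\<lambda>x. a x * d x)"
  shows "(\<integral>x. a x * d x \<partial>M) \<le> sqrt (\<integral>x. (a x)\<^sup>2 \<partial>M) * sqrt (\<integral>x. (d x)\<^sup>2 \<partial>M)"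
proof (rule le_sqrt_mult_sqrt_if_AM_GM)
  fix c :: real assume c: "c > 0"
  have "2 * (a x * d x) \<le> c * (a x)\<^sup>2 + (d x)\<^sup>2 / c" for x
  proof -
    have "0 \<le> (c * a x - d x)\<^sup>2 / c"
      using c by simp
    then show ?thesis
      using c by (simp add: field_simps power2_eq_square)
  qed
  then have "(\<integral>x. 2 * (a x * d x) \<partial>M) \<le> (\<integral>x. c * (a x)\<^sup>2 + (d x)\<^sup>2 / c \<partial>M)"
    using assms by (intro integral_mono) auto
  with assms show "2 * (\<integral>x. a x * d x \<partial>M) \<le> c * (\<integral>x. (a x)\<^sup>2 \<partial>M) + (\<integral>x. (d x)\<^sup>2 \<partial>M) / c"
    by simp
qed auto

lemma weighted_sum_sq_le:
  fixes e c :: "'a \<Rightarrow> real"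
  assumes "\<And>t. t \<in> I \<Longrightarrow> 0 \<le> e t"
  shows "(\<Sum>t\<in>I. e t * c t)\<^sup>2 \<le> (\<Sum>t\<in>I. e t) * (\<Sum>t\<in>I. e t * (c t)\<^sup>2)"
proof -
  have "(\<Sum>t\<in>I. sqrt (e t) * (sqrt (e t) * c t))\<^sup>2
      \<le> (\<Sum>t\<in>I. (sqrt (e t))\<^sup>2) * (\<Sum>t\<in>I. (sqrt (e t) * c t)\<^sup>2)"
    by (rule Cauchy_Schwarz_ineq_sum)
  also have "(\<Sum>t\<in>I. sqrt (e t) * (sqrt (e t) * c t)) = (\<Sum>t\<in>I. e t * c t)"
    using assms by (intro sum.cong) (auto simp flip: mult.assoc)
  also have "(\<Sum>t\<in>I. (sqrt (e t) * c t)\<^sup>2) = (\<Sum>t\<in>I. e t * (c t)\<^sup>2)"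
    using assms by (intro sum.cong) (auto simp: power_mult_distrib)
  finally show ?thesis
    using assms by simp
qed

section \<open>Generalization gap of full-batch gradient descent\<close>

locale full_batch_gd =
  fixes D :: "'z measure" and f :: "'w::euclidean_space \<Rightarrow> 'z \<Rightarrow> real"
    and g :: "'w \<Rightarrow> 'z \<Rightarrow> 'w" and eta :: "nat \<Rightarrow> real" and W1 :: 'w
    and beta :: real and n T i :: nat
  assumes D: "prob_space D" and i: "i < n"
    and nonneg: "\<And>w z. f w z \<ge> 0"
    and smooth: "\<And>z. convex_smooth (\<lambda>w. f w z) (\<lambda>w. g w z) beta"
    and eta: "\<And>t. 1 \<le> t \<Longrightarrow> t \<le> T \<Longrightarrow> 0 \<le> eta t \<and> eta t \<le> 1 / beta"
    and f_meas: "(\<lambda>(w, z). f w z) \<in> borel_measurable (borel \<Otimes>\<^sub>M D)"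
    and g_meas: "(\<lambda>(w, z). g w z) \<in> borel_measurable (borel \<Otimes>\<^sub>M D)"
    and f_int: "\<And>w. integrable D (f w)"
    and int_pop: "integrable (sample_measure n D) (\<lambda>S. pop_risk D f (gd_out n g eta W1 T S))"
    and int_emp: "integrable (sample_measure n D) (\<lambda>S. emp_risk n f S (gd_out n g eta W1 T S))"
    and int_min: "integrable (sample_measure n D) (\<lambda>S. emp_risk n f S (emp_minimizer n f S))"
    and int_grad: "\<And>t. 1 \<le> t \<Longrightarrow> t \<le> T \<Longrightarrow>
        integrable (sample_measure n D) (\<lambda>S. (norm (g (gd_iter n g eta W1 S t) (S i)))\<^sup>2)"
begin

abbreviation "M \<equiv> sample_measure n D"

text \<open>\<open>M'\<close> adds a ghost point \<open>z'\<^sub>i\<close> at index \<open>n\<close>; swapping the coordinates \<open>i\<close> and \<open>n\<close> turns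
  the sample \<open>S\<close> into \<open>S\<^sup>(\<^sup>i\<^sup>)\<close>, in which \<open>z\<^sub>i\<close> is replaced by \<open>z'\<^sub>i\<close>.\<close>
abbreviation "M' \<equiv> PiM (insert n {..<n}) (\<lambda>_. D)"

definition swap_ghost :: "(nat \<Rightarrow> 'z) \<Rightarrow> nat \<Rightarrow> 'z" where
  "swap_ghost x = (\<lambda>j\<in>insert n {..<n}. x (Transposition.transpose i n j))"

lemma swap_ghost_apply:
  "swap_ghost x n = x i" "swap_ghost x i = x n" "j < n \<Longrightarrow> j \<noteq> i \<Longrightarrow> swap_ghost x j = x j"
  using i by (auto simp: swap_ghost_def)

abbreviation "out S \<equiv> gd_aux n g eta W1 S T"

abbreviation "grad_norm t S \<equiv> norm (g (gd_aux n g eta W1 S (t - 1)) (S i))"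

abbreviation "out_gap x \<equiv> norm (out (swap_ghost x) - out x)"

lemma M_eq: "M = PiM {..<n} (\<lambda>_. D)"
  by (simp add: sample_measure_def)

lemma measurable_gd_aux [measurable]:
  "(\<lambda>S. gd_aux n g eta W1 S k) \<in> borel_measurable M"
  "(\<lambda>S. gd_aux n g eta W1 S k) \<in> borel_measurable M'"
  unfolding M_eq by (auto intro: borel_measurable_gd_aux[OF g_meas])

lemma measurable_sample_component [measurable]:
  "j < n \<Longrightarrow> (\<lambda>S. S j) \<in> measurable M D"
  "j \<le> n \<Longrightarrow> (\<lambda>S. S j) \<in> measurable M' D"
  unfolding M_eq by (auto intro: measurable_component_singleton)

lemma measurable_swap_ghost [measurable]: "swap_ghost \<in> measurable M' M'"
  unfolding swap_ghost_def using i by (intro measurable_restrict measurable_component_singleton)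
    (auto simp: Transposition.transpose_def)

lemma borel_measurable_f_compose:
  "X \<in> borel_measurable N \<Longrightarrow> Z \<in> measurable N D \<Longrightarrow> (\<lambda>x. f (X x) (Z x)) \<in> borel_measurable N"
  by (rule borel_measurable_compose_uncurry[OF f_meas])

lemma borel_measurable_g_compose:
  "X \<in> borel_measurable N \<Longrightarrow> Z \<in> measurable N D \<Longrightarrow> (\<lambda>x. g (X x) (Z x)) \<in> borel_measurable N"
  by (rule borel_measurable_compose_uncurry[OF g_meas])

lemma
  fixes F :: "(nat \<Rightarrow> 'z) \<Rightarrow> real"
  assumes "F \<in> borel_measurable M"
  shows integral_M'_restrict: "(\<integral>x. F (restrict x {..<n}) \<partial>M') = integral\<^sup>L M F"
    and integrable_M'_restrict_iff: "integrable M' (\<lambda>x. F (restrict x {..<n})) \<longleftrightarrow> integrable M F"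
  using integral_PiM_restrict[OF D _ _ assms[unfolded M_eq], of "insert n {..<n}"]
    integrable_PiM_restrict_iff[OF D _ _ assms[unfolded M_eq], of "insert n {..<n}"]
  by (auto simp: M_eq)

lemma
  fixes F :: "(nat \<Rightarrow> 'z) \<Rightarrow> real"
  assumes "F \<in> borel_measurable M'"
  shows integral_M'_swap_ghost: "(\<integral>x. F (swap_ghost x) \<partial>M') = integral\<^sup>L M' F"
    and integrable_M'_swap_ghost_iff: "integrable M' (\<lambda>x. F (swap_ghost x)) \<longleftrightarrow> integrable M' F"
  using integral_PiM_transpose[OF D _ _ assms] integrable_PiM_transpose_iff[OF D _ _ assms] i
  by (auto simp: swap_ghost_def)

lemma borel_measurable_loss [measurable]:
  "j < n \<Longrightarrow> (\<lambda>S. f (out S) (S j)) \<in> borel_measurable M"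
  "j \<le> n \<Longrightarrow> (\<lambda>x. f (out x) (x j)) \<in> borel_measurable M'"
  by (intro borel_measurable_f_compose measurable_gd_aux measurable_sample_component; simp)+

lemma integrable_loss_at_sample_point:
  assumes j: "j < n"
  shows "integrable M (\<lambda>S. f (out S) (S j))"
proof (rule Bochner_Integration.integrable_bound)
  show "integrable M (\<lambda>S. real n * emp_risk n f S (out S))"
    using int_emp by (simp add: gd_out_eq_gd_aux)
  have "f (out S) (S j) \<le> (\<Sum>k<n. f (out S) (S k))" for S
    using j by (intro member_le_sum nonneg) auto
  then have "f (out S) (S j) \<le> real n * emp_risk n f S (out S)" for S
    using j by (simp add: emp_risk_def)
  then show "AE S in M. norm (f (out S) (S j)) \<le> norm (real n * emp_risk n f S (out S))"
    using nonneg by (intro AE_I2) (simp add: order_trans[OF _ abs_ge_self])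
qed (use j in simp)

lemma integral_loss_at_sample_point:
  assumes j: "j < n"
  shows "(\<integral>S. f (out S) (S j) \<partial>M) = (\<integral>S. f (out S) (S i) \<partial>M)"
proof -
  let ?swap = "\<lambda>S. \<lambda>l\<in>{..<n}. S (Transposition.transpose i j l)"
  have "out (?swap S) = out S" for S
  proof -
    have "out (?swap S) = out (S \<circ> Transposition.transpose i j)"
      by (rule gd_aux_cong) simp
    also have "\<dots> = out S"
      using i j by (intro gd_aux_permute_sample) simp
    finally show ?thesis .
  qed
  then have "(\<integral>S. f (out S) (S j) \<partial>M) = (\<integral>S. f (out (?swap S)) (?swap S i) \<partial>M)"
    using i by simp
  also have "\<dots> = (\<integral>S. f (out S) (S i) \<partial>M)"
    unfolding M_eq using i j borel_measurable_loss(1)[OF i]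
    by (intro integral_PiM_transpose[OF D]) (simp_all add: M_eq)
  finally show ?thesis .
qed

lemma integral_emp_risk_out: "(\<integral>S. emp_risk n f S (out S) \<partial>M) = (\<integral>S. f (out S) (S i) \<partial>M)"
proof -
  have "(\<integral>S. emp_risk n f S (out S) \<partial>M) = (\<Sum>j<n. (\<integral>S. f (out S) (S j) \<partial>M)) / real n"
    unfolding emp_risk_def using integrable_loss_at_sample_point by simp
  also have "\<dots> = (\<Sum>j<n. (\<integral>S. f (out S) (S i) \<partial>M)) / real n"
    by (intro arg_cong2[where f = "(/)"] sum.cong refl integral_loss_at_sample_point) simp
  finally show ?thesis
    using i by simp
qed

lemma
  shows integrable_loss_M': "integrable M' (\<lambda>x. f (out x) (x i))"
    and eps_opt_add_eps_c: "eps_opt n D f g eta W1 T + eps_c n D f = (\<integral>x. f (out x) (x i) \<partial>M')"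
proof -
  show "integrable M' (\<lambda>x. f (out x) (x i))"
    using integrable_M'_restrict_iff[OF borel_measurable_loss(1)[OF i]]
      integrable_loss_at_sample_point[OF i] i by (simp add: gd_aux_restrict)
  have "eps_opt n D f g eta W1 T = (\<integral>S. emp_risk n f S (out S) \<partial>M) - eps_c n D f"
    unfolding eps_opt_def eps_c_def using int_emp int_min by (simp add: gd_out_eq_gd_aux)
  then show "eps_opt n D f g eta W1 T + eps_c n D f = (\<integral>x. f (out x) (x i) \<partial>M')"
    using integral_M'_restrict[OF borel_measurable_loss(1)[OF i]] i
    by (simp add: integral_emp_risk_out gd_aux_restrict)
qed

lemma nn_integral_loss_at_ghost:
  "(\<integral>\<^sup>+x. ennreal (f (out x) (x n)) \<partial>M') = ennreal (\<integral>S. pop_risk D f (out S) \<partial>M)"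
proof -
  interpret product_prob_space "\<lambda>_. D"
    by (rule product_prob_space_const[OF D])
  have "(\<integral>\<^sup>+x. ennreal (f (out x) (x n)) \<partial>M')
      = (\<integral>\<^sup>+S. (\<integral>\<^sup>+y. ennreal (f (out (S(n := y))) y) \<partial>D) \<partial>M)"
    unfolding M_eq by (subst product_nn_integral_insert) auto
  also have "\<dots> = (\<integral>\<^sup>+S. ennreal (pop_risk D f (out S)) \<partial>M)"
  proof (intro nn_integral_cong)
    fix S :: "nat \<Rightarrow> 'z"
    have "out (S(n := y)) = out S" for y
      by (rule gd_aux_cong) simp
    then show "(\<integral>\<^sup>+y. ennreal (f (out (S(n := y))) y) \<partial>D) = ennreal (pop_risk D f (out S))"
      unfolding pop_risk_def using f_int nonneg by (simp add: nn_integral_eq_integral)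
  qed
  also have "\<dots> = ennreal (\<integral>S. pop_risk D f (out S) \<partial>M)"
    using int_pop nonneg
    by (intro nn_integral_eq_integral) (auto simp: gd_out_eq_gd_aux pop_risk_def)
  finally show ?thesis .
qed

lemma
  shows integrable_loss_at_ghost: "integrable M' (\<lambda>x. f (out x) (x n))"
    and integral_loss_at_ghost: "(\<integral>x. f (out x) (x n) \<partial>M') = (\<integral>S. pop_risk D f (out S) \<partial>M)"
proof -
  show "integrable M' (\<lambda>x. f (out x) (x n))"
    using nn_integral_loss_at_ghost nonneg by (intro integrableI_nn_integral_finite) auto
  have "0 \<le> (\<integral>S. pop_risk D f (out S) \<partial>M)"
    using nonneg by (auto simp: pop_risk_def intro!: integral_nonneg_AE)
  then show "(\<integral>x. f (out x) (x n) \<partial>M') = (\<integral>S. pop_risk D f (out S) \<partial>M)"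
    using integral_eq_nn_integral[OF borel_measurable_loss(2)[OF le_refl]] nn_integral_loss_at_ghost nonneg
    by simp
qed

lemma
  shows integrable_loss_swap_ghost: "integrable M' (\<lambda>x. f (out (swap_ghost x)) (x i))"
    and eps_gen_eq_swap_ghost: "eps_gen n D f g eta W1 T
      = (\<integral>x. f (out (swap_ghost x)) (x i) - f (out x) (x i) \<partial>M')"
proof -
  note swap = integrable_M'_swap_ghost_iff[OF borel_measurable_loss(2)[OF le_refl]]
    integral_M'_swap_ghost[OF borel_measurable_loss(2)[OF le_refl]]
  show int: "integrable M' (\<lambda>x. f (out (swap_ghost x)) (x i))"
    using swap(1) integrable_loss_at_ghost by (simp add: swap_ghost_apply)
  have "eps_gen n D f g eta W1 T = (\<integral>S. pop_risk D f (out S) \<partial>M) - (\<integral>S. emp_risk n f S (out S) \<partial>M)"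
    unfolding eps_gen_def using int_pop int_emp by (simp add: gd_out_eq_gd_aux)
  also have "(\<integral>S. pop_risk D f (out S) \<partial>M) = (\<integral>x. f (out (swap_ghost x)) (x i) \<partial>M')"
    using swap(2) integral_loss_at_ghost by (simp add: swap_ghost_apply)
  also have "(\<integral>S. emp_risk n f S (out S) \<partial>M) = (\<integral>x. f (out x) (x i) \<partial>M')"
    using eps_opt_add_eps_c int_emp int_min
    by (simp add: eps_opt_def eps_c_def gd_out_eq_gd_aux)
  also have "(\<integral>x. f (out (swap_ghost x)) (x i) \<partial>M') - (\<integral>x. f (out x) (x i) \<partial>M')
      = (\<integral>x. f (out (swap_ghost x)) (x i) - f (out x) (x i) \<partial>M')"
    using int integrable_loss_M' by simp
  finally show "eps_gen n D f g eta W1 T = (\<integral>x. f (out (swap_ghost x)) (x i) - f (out x) (x i) \<partial>M')" .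
qed

lemma borel_measurable_grad_norm_sq [measurable]:
  "(\<lambda>S. (grad_norm t S)\<^sup>2) \<in> borel_measurable M"
  "(\<lambda>x. (grad_norm t x)\<^sup>2) \<in> borel_measurable M'"
  using borel_measurable_g_compose[OF measurable_gd_aux(1) measurable_sample_component(1)[OF i]]
    borel_measurable_g_compose[OF measurable_gd_aux(2) measurable_sample_component(2)] i
  by simp_all

lemma
  assumes t: "1 \<le> t" "t \<le> T"
  shows integrable_grad_norm_sq: "integrable M' (\<lambda>x. (grad_norm t x)\<^sup>2)"
    and integrable_grad_norm_sq_swap_ghost: "integrable M' (\<lambda>x. (grad_norm t (swap_ghost x))\<^sup>2)"
    and integral_grad_norm_sq:
      "(\<integral>x. (grad_norm t x)\<^sup>2 \<partial>M') = (\<integral>S. (norm (g (gd_iter n g eta W1 S t) (S i)))\<^sup>2 \<partial>M)"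
    and integral_grad_norm_sq_swap_ghost:
      "(\<integral>x. (grad_norm t (swap_ghost x))\<^sup>2 \<partial>M') = (\<integral>S. (norm (g (gd_iter n g eta W1 S t) (S i)))\<^sup>2 \<partial>M)"
proof -
  note iter = gd_iter_def[of n g eta W1]
  show int: "integrable M' (\<lambda>x. (grad_norm t x)\<^sup>2)"
    using integrable_M'_restrict_iff[OF borel_measurable_grad_norm_sq(1)] int_grad[OF t] i
    by (simp add: gd_aux_restrict iter)
  show eq: "(\<integral>x. (grad_norm t x)\<^sup>2 \<partial>M') = (\<integral>S. (norm (g (gd_iter n g eta W1 S t) (S i)))\<^sup>2 \<partial>M)"
    using integral_M'_restrict[OF borel_measurable_grad_norm_sq(1)] i
    by (simp add: gd_aux_restrict iter)
  note swap = integrable_M'_swap_ghost_iff[OF borel_measurable_grad_norm_sq(2)]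
    integral_M'_swap_ghost[OF borel_measurable_grad_norm_sq(2)]
  show "integrable M' (\<lambda>x. (grad_norm t (swap_ghost x))\<^sup>2)"
    using swap(1) int by simp
  show "(\<integral>x. (grad_norm t (swap_ghost x))\<^sup>2 \<partial>M') = (\<integral>S. (norm (g (gd_iter n g eta W1 S t) (S i)))\<^sup>2 \<partial>M)"
    using swap(2) eq by simp
qed

lemma out_gap_le:
  "out_gap x \<le> (\<Sum>t=1..T. eta t * (grad_norm t x + grad_norm t (swap_ghost x))) / real n"
proof -
  have "norm (out x - out (swap_ghost x))
      \<le> (\<Sum>t=1..T. eta t / real n * (grad_norm t x + grad_norm t (swap_ghost x)))"
    by (intro gd_aux_replace_one_dist[OF i smooth eta]) (auto simp: swap_ghost_apply)
  then show ?thesis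
    by (simp add: norm_minus_commute sum_divide_distrib)
qed

lemma out_gap_sq_le:
  "(out_gap x)\<^sup>2 \<le> 2 * (\<Sum>t=1..T. eta t) / (real n)\<^sup>2
      * (\<Sum>t=1..T. eta t * ((grad_norm t x)\<^sup>2 + (grad_norm t (swap_ghost x))\<^sup>2))"
proof -
  let ?a = "\<lambda>t. grad_norm t x" and ?b = "\<lambda>t. grad_norm t (swap_ghost x)"
  have eta_nonneg: "t \<in> {1..T} \<Longrightarrow> 0 \<le> eta t" for t
    using eta[of t] by auto
  have "(out_gap x)\<^sup>2 \<le> ((\<Sum>t=1..T. eta t * (?a t + ?b t)) / real n)\<^sup>2"
    using out_gap_le by (intro power_mono) auto
  also have "\<dots> \<le> (\<Sum>t=1..T. eta t) * (\<Sum>t=1..T. eta t * (?a t + ?b t)\<^sup>2) / (real n)\<^sup>2"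
    unfolding power_divide using eta_nonneg by (intro divide_right_mono weighted_sum_sq_le) auto
  also have "\<dots> \<le> (\<Sum>t=1..T. eta t) * (2 * (\<Sum>t=1..T. eta t * ((?a t)\<^sup>2 + (?b t)\<^sup>2))) / (real n)\<^sup>2"
  proof -
    have "(?a t + ?b t)\<^sup>2 \<le> 2 * ((?a t)\<^sup>2 + (?b t)\<^sup>2)" for t
      using sum_squares_bound[of "?a t" "?b t"] by (simp add: power2_sum)
    then have "(\<Sum>t=1..T. eta t * (?a t + ?b t)\<^sup>2) \<le> (\<Sum>t=1..T. eta t * (2 * ((?a t)\<^sup>2 + (?b t)\<^sup>2)))"
      using eta_nonneg by (intro sum_mono mult_left_mono) auto
    also have "\<dots> = 2 * (\<Sum>t=1..T. eta t * ((?a t)\<^sup>2 + (?b t)\<^sup>2))"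
      by (simp add: sum_distrib_left mult.left_commute)
    finally show ?thesis
      using eta_nonneg by (intro divide_right_mono mult_left_mono sum_nonneg) auto
  qed
  finally show ?thesis
    by (simp add: ac_simps)
qed

lemma
  shows integrable_grad_norm_sq_sum:
      "integrable M' (\<lambda>x. \<Sum>t=1..T. eta t * ((grad_norm t x)\<^sup>2 + (grad_norm t (swap_ghost x))\<^sup>2))"
    and integral_grad_norm_sq_sum:
      "(\<integral>x. (\<Sum>t=1..T. eta t * ((grad_norm t x)\<^sup>2 + (grad_norm t (swap_ghost x))\<^sup>2)) \<partial>M')
        = 2 * eps_path n D g eta W1 T i"
proof -
  have summand: "integrable M' (\<lambda>x. eta t * ((grad_norm t x)\<^sup>2 + (grad_norm t (swap_ghost x))\<^sup>2))
    \<and> (\<integral>x. eta t * ((grad_norm t x)\<^sup>2 + (grad_norm t (swap_ghost x))\<^sup>2) \<partial>M')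
      = 2 * (eta t * (\<integral>S. (norm (g (gd_iter n g eta W1 S t) (S i)))\<^sup>2 \<partial>M))"
    if "t \<in> {1..T}" for t
  proof -
    from that have t: "1 \<le> t" "t \<le> T" by auto
    show ?thesis
      using integrable_grad_norm_sq[OF t] integrable_grad_norm_sq_swap_ghost[OF t]
        integral_grad_norm_sq[OF t] integral_grad_norm_sq_swap_ghost[OF t]
      by simp
  qed
  show "integrable M' (\<lambda>x. \<Sum>t=1..T. eta t * ((grad_norm t x)\<^sup>2 + (grad_norm t (swap_ghost x))\<^sup>2))"
    by (rule Bochner_Integration.integrable_sum) (use summand in blast)
  have "(\<integral>x. (\<Sum>t=1..T. eta t * ((grad_norm t x)\<^sup>2 + (grad_norm t (swap_ghost x))\<^sup>2)) \<partial>M')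
      = (\<Sum>t=1..T. (\<integral>x. eta t * ((grad_norm t x)\<^sup>2 + (grad_norm t (swap_ghost x))\<^sup>2) \<partial>M'))"
    by (rule Bochner_Integration.integral_sum) (use summand in blast)
  also have "\<dots> = (\<Sum>t=1..T. 2 * (eta t * (\<integral>S. (norm (g (gd_iter n g eta W1 S t) (S i)))\<^sup>2 \<partial>M)))"
    by (rule sum.cong) (use summand in blast)+
  finally show "(\<integral>x. (\<Sum>t=1..T. eta t * ((grad_norm t x)\<^sup>2 + (grad_norm t (swap_ghost x))\<^sup>2)) \<partial>M')
      = 2 * eps_path n D g eta W1 T i"
    by (simp add: eps_path_def sum_distrib_left)
qed

lemma
  shows integrable_out_gap_sq: "integrable M' (\<lambda>x. (out_gap x)\<^sup>2)"
    and integral_out_gap_sq_le: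
      "(\<integral>x. (out_gap x)\<^sup>2 \<partial>M') \<le> 4 * (\<Sum>t=1..T. eta t) * eps_path n D g eta W1 T i / (real n)\<^sup>2"
proof -
  define R where "R x = 2 * (\<Sum>t=1..T. eta t) / (real n)\<^sup>2
      * (\<Sum>t=1..T. eta t * ((grad_norm t x)\<^sup>2 + (grad_norm t (swap_ghost x))\<^sup>2))" for x
  have int_R: "integrable M' R"
    unfolding R_def using integrable_grad_norm_sq_sum by simp
  have bound: "(out_gap x)\<^sup>2 \<le> R x" for x
    unfolding R_def by (rule out_gap_sq_le)
  show int: "integrable M' (\<lambda>x. (out_gap x)\<^sup>2)"
    using bound by (intro Bochner_Integration.integrable_bound[OF int_R])
      (auto intro!: AE_I2 intro: order_trans[OF _ abs_ge_self])
  have "(\<integral>x. (out_gap x)\<^sup>2 \<partial>M') \<le> integral\<^sup>L M' R"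
    using int int_R bound by (rule integral_mono)
  also have "\<dots> = 4 * (\<Sum>t=1..T. eta t) * eps_path n D g eta W1 T i / (real n)\<^sup>2"
    unfolding R_def integral_mult_right_zero integral_grad_norm_sq_sum by simp
  finally show "(\<integral>x. (out_gap x)\<^sup>2 \<partial>M') \<le> 4 * (\<Sum>t=1..T. eta t) * eps_path n D g eta W1 T i / (real n)\<^sup>2" .
qed

lemma borel_measurable_grad_out [measurable]: "(\<lambda>x. norm (g (out x) (x i))) \<in> borel_measurable M'"
  using borel_measurable_g_compose[OF measurable_gd_aux(2)[of T] measurable_sample_component(2)[of i]] i
  by simp

lemma borel_measurable_out_gap [measurable]: "out_gap \<in> borel_measurable M'"
  by measurable

lemma
  shows integrable_grad_out_sq: "integrable M' (\<lambda>x. (norm (g (out x) (x i)))\<^sup>2)"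
    and integral_grad_out_sq_le:
      "(\<integral>x. (norm (g (out x) (x i)))\<^sup>2 \<partial>M') \<le> 4 * beta * (eps_opt n D f g eta W1 T + eps_c n D f)"
proof -
  have bound: "(norm (g (out x) (x i)))\<^sup>2 \<le> 4 * beta * f (out x) (x i)" for x
    by (rule convex_smooth.norm_gradient_sq_le[OF smooth nonneg])
  show int: "integrable M' (\<lambda>x. (norm (g (out x) (x i)))\<^sup>2)"
    using bound nonneg convex_smooth.L_pos[OF smooth]
    by (intro Bochner_Integration.integrable_bound[OF integrable_mult_right[OF integrable_loss_M',
          of "4 * beta"]])
      (auto intro!: AE_I2 simp: abs_of_nonneg)
  have "(\<integral>x. (norm (g (out x) (x i)))\<^sup>2 \<partial>M') \<le> (\<integral>x. 4 * beta * f (out x) (x i) \<partial>M')"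
    using int integrable_loss_M' bound by (intro integral_mono) auto
  then show "(\<integral>x. (norm (g (out x) (x i)))\<^sup>2 \<partial>M') \<le> 4 * beta * (eps_opt n D f g eta W1 T + eps_c n D f)"
    by (simp add: eps_opt_add_eps_c)
qed

lemma abs_eps_gen_le_sqrt:
  defines "Q \<equiv> (\<integral>x. (out_gap x)\<^sup>2 \<partial>M')"
  shows "\<bar>eps_gen n D f g eta W1 T\<bar>
    \<le> sqrt (4 * beta * (eps_opt n D f g eta W1 T + eps_c n D f)) * sqrt Q + beta * Q"
proof -
  let ?a = "\<lambda>x. norm (g (out x) (x i))"
  have "?a x * out_gap x \<le> (?a x)\<^sup>2 + (out_gap x)\<^sup>2" for x
    using sum_squares_bound[of "?a x" "out_gap x"] mult_nonneg_nonneg[OF norm_ge_zero norm_ge_zero,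
        of "g (out x) (x i)" "out (swap_ghost x) - out x"]
    by linarith
  then have int_prod: "integrable M' (\<lambda>x. ?a x * out_gap x)"
    by (intro Bochner_Integration.integrable_bound[OF Bochner_Integration.integrable_add[OF
          integrable_grad_out_sq integrable_out_gap_sq]])
      (auto intro!: AE_I2 borel_measurable_times borel_measurable_grad_out borel_measurable_out_gap)
  have "\<bar>eps_gen n D f g eta W1 T\<bar> \<le> (\<integral>x. \<bar>f (out (swap_ghost x)) (x i) - f (out x) (x i)\<bar> \<partial>M')"
    using integral_norm_bound[of M' "\<lambda>x. f (out (swap_ghost x)) (x i) - f (out x) (x i)"]
    by (simp add: eps_gen_eq_swap_ghost)
  also have "\<dots> \<le> (\<integral>x. ?a x * out_gap x + beta * (out_gap x)\<^sup>2 \<partial>M')"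
    using integrable_loss_swap_ghost integrable_loss_M' int_prod integrable_out_gap_sq
      convex_smooth.abs_diff_le[OF smooth]
    by (intro integral_mono) auto
  also have "\<dots> = (\<integral>x. ?a x * out_gap x \<partial>M') + beta * Q"
    using int_prod integrable_out_gap_sq by (simp add: Q_def)
  also have "(\<integral>x. ?a x * out_gap x \<partial>M') \<le> sqrt (\<integral>x. (?a x)\<^sup>2 \<partial>M') * sqrt Q"
    unfolding Q_def using integrable_grad_out_sq integrable_out_gap_sq int_prod
    by (rule integral_mult_le_sqrt_integral_sq)
  also have "\<dots> \<le> sqrt (4 * beta * (eps_opt n D f g eta W1 T + eps_c n D f)) * sqrt Q"
    using integral_grad_out_sq_le
    by (intro mult_right_mono real_sqrt_le_mono) (auto simp: Q_def intro!: integral_nonneg_AE)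
  finally show ?thesis
    by simp
qed

lemma eps_opt_add_eps_c_nonneg: "0 \<le> eps_opt n D f g eta W1 T + eps_c n D f"
  unfolding eps_opt_add_eps_c using nonneg by (auto intro!: integral_nonneg_AE)

lemma abs_eps_gen_le:
  defines "X \<equiv> eps_opt n D f g eta W1 T + eps_c n D f"
    and "P \<equiv> eps_path n D g eta W1 T i" and "H \<equiv> \<Sum>t=1..T. eta t"
  shows "\<bar>eps_gen n D f g eta W1 T\<bar>
    \<le> 4 * sqrt (beta * X * P) / real n * sqrt H + 4 * beta * P / (real n)\<^sup>2 * H"
proof -
  define Q where "Q = (\<integral>x. (out_gap x)\<^sup>2 \<partial>M')"
  have Q: "Q \<le> 4 * H * P / (real n)\<^sup>2"
    unfolding Q_def H_def P_def by (rule integral_out_gap_sq_le)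
  have beta: "0 \<le> beta"
    using convex_smooth.L_pos[OF smooth] by simp
  have "\<bar>eps_gen n D f g eta W1 T\<bar> \<le> sqrt (4 * beta * X) * sqrt Q + beta * Q"
    unfolding Q_def X_def by (rule abs_eps_gen_le_sqrt)
  also have "\<dots> \<le> sqrt (4 * beta * X) * sqrt (4 * H * P / (real n)\<^sup>2) + beta * (4 * H * P / (real n)\<^sup>2)"
    using Q beta eps_opt_add_eps_c_nonneg unfolding X_def
    by (intro add_mono mult_left_mono real_sqrt_le_mono) auto
  also have "\<dots> = 4 * sqrt (beta * X * P) / real n * sqrt H + 4 * beta * P / (real n)\<^sup>2 * H"
    using i by (simp add: real_sqrt_mult real_sqrt_divide ac_simps)
  finally show ?thesis .
qed

end

theorem theorem11:
  fixes D :: "'z measure" and f :: "'w::euclidean_space \<Rightarrow> 'z \<Rightarrow> real"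
    and g :: "'w \<Rightarrow> 'z \<Rightarrow> 'w" and eta :: "nat \<Rightarrow> real" and W1 :: 'w
    and beta :: real and n T i :: nat
  assumes D: "prob_space D"
    and n: "n \<ge> 1" and i: "i < n"
    and nonneg: "\<And>w z. f w z \<ge> 0"
    and grad: "\<And>w z. GDERIV (\<lambda>v. f v z) w :> g w z"
    and convex: "\<And>z. convex_on UNIV (\<lambda>w. f w z)"
    and beta: "beta > 0"
    and smooth: "\<And>w u z. norm (g w z - g u z) \<le> beta * norm (w - u)"
    and eta: "\<And>t. 1 \<le> t \<Longrightarrow> t \<le> T + 1 \<Longrightarrow> 0 \<le> eta t \<and> eta t \<le> 1 / (2 * beta)"
    and f_meas: "(\<lambda>(w, z). f w z) \<in> borel_measurable (borel \<Otimes>\<^sub>M D)"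
    and g_meas: "(\<lambda>(w, z). g w z) \<in> borel_measurable (borel \<Otimes>\<^sub>M D)"
    and f_int: "\<And>w. integrable D (f w)"
    and minimizer_ex: "\<And>S. S \<in> space (sample_measure n D) \<Longrightarrow> \<exists>w. \<forall>u. emp_risk n f S w \<le> emp_risk n f S u"
    and int_pop: "integrable (sample_measure n D) (\<lambda>S. pop_risk D f (gd_out n g eta W1 T S))"
    and int_emp: "integrable (sample_measure n D) (\<lambda>S. emp_risk n f S (gd_out n g eta W1 T S))"
    and int_min: "integrable (sample_measure n D) (\<lambda>S. emp_risk n f S (emp_minimizer n f S))"
    and int_grad: "\<And>t. 1 \<le> t \<Longrightarrow> t \<le> T \<Longrightarrow>
        integrable (sample_measure n D) (\<lambda>S. (norm (g (gd_iter n g eta W1 S t) (S i)))\<^sup>2)"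
  shows "\<bar>eps_gen n D f g eta W1 T\<bar>
    \<le> 4 * sqrt (2 * beta * (eps_opt n D f g eta W1 T + eps_c n D f) * eps_path n D g eta W1 T i) / real n
         * sqrt (\<Sum>t=1..T. eta t)
       + 8 * beta * eps_path n D g eta W1 T i / (real n)\<^sup>2 * (\<Sum>t=1..T. eta t)"
proof -
  have smooth': "convex_smooth (\<lambda>w. f w z) (\<lambda>w. g w z) beta" for z
    using grad convex smooth beta by unfold_locales
  have eta': "0 \<le> eta t \<and> eta t \<le> 1 / beta" if "1 \<le> t" "t \<le> T" for t
    using eta[of t] that beta by (auto simp: field_simps)
  interpret full_batch_gd D f g eta W1 beta n T i
    by (rule full_batch_gd.intro[OF D i nonneg smooth' eta' f_meas g_meas f_int
          int_pop int_emp int_min int_grad])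
  define X where "X = eps_opt n D f g eta W1 T + eps_c n D f"
  define P where "P = eps_path n D g eta W1 T i"
  define H where "H = (\<Sum>t=1..T. eta t)"
  have "0 \<le> X"
    unfolding X_def by (rule eps_opt_add_eps_c_nonneg)
  moreover have "0 \<le> P" "0 \<le> H"
    using eta by (auto simp: P_def H_def eps_path_def intro!: sum_nonneg mult_nonneg_nonneg integral_nonneg_AE)
  ultimately have "4 * sqrt (beta * X * P) / real n * sqrt H + 4 * beta * P / (real n)\<^sup>2 * H
      \<le> 4 * sqrt (2 * beta * X * P) / real n * sqrt H + 8 * beta * P / (real n)\<^sup>2 * H"
    using beta by (intro add_mono mult_right_mono divide_right_mono mult_left_mono real_sqrt_le_mono) auto
  with abs_eps_gen_le show ?thesis
    unfolding X_def P_def H_def by linarith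
qed

end
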